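(* In the setting below, let $F,G:\widehat{A}\to\widehat{A}'$ be $\mathcal{A}_\infty$-morphisms with $F_n=G_n=0$ for $n>2$, and let $H$ be an $\mathcal{A}_\infty$ homotopy between $F$ and $G$ with $H_n=0$ for $n>1$. Define $H\boxtimes\mathrm{id}_{DD}:\widehat{A}\to\mathcal{B}'\otimes_{\mathcal{I}}\widehat{A}'$ by $x\mapsto1\otimes H_1(x)$. Then $H\boxtimes\mathrm{id}_{DD}$ is a homotopy of Type D morphisms between $F\boxtimes\mathrm{id}_{DD}$ and $G\boxtimes\mathrm{id}_{DD}$, i.e. \[ F\boxtimes\mathrm{id}_{DD}-G\boxtimes\mathrm{id}_{DD}=(\mu_2\otimes\mathrm{id})(\mathrm{id}\otimes H\boxtimes\mathrm{id}_{DD})\delta+(\mu_2\otimes\mathrm{id})(\mathrm{id}\otimes\delta')(H\boxtimes\mathrm{id}_{DD})+(\mu_1\otimes|\mathrm{id}|)(H\boxtimes\mathrm{id}_{DD}), \] where $\delta,\delta'$ are the Type D structure maps of $\widehat{A}\boxtimes\widehat{DD}$ and $\widehat{A}'\boxtimes\widehat{DD}$.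
   Context: $\mathcal{I}=\mathbb{Z}e_1\times\cdots\times\mathbb{Z}e_k$; $\mathcal{B},\mathcal{B}'$ differential bigraded algebras over $\mathcal{I}$ (bigraded by intrinsic and homological degree $\deg_h$, degree-$(0,0)$ part $\mathcal{I}$, differential $\mu_1$ of bidegree $(0,1)$, $\mu_1^2=0$, $\mu_1(xy)=(-1)^{\deg_hy}\mu_1(x)y+x\mu_1(y)$, multiplication $\mu_2$). $\widehat{A},\widehat{A}'$ are right dg $\mathcal{B}$-modules (differential $m_1$, resp. $m_1'$, of bidegree $(0,1)$ squaring to zero with $m_1(xb)=(-1)^{\deg_hb}m_1(x)b+x\mu_1(b)$; actions $m_2,m_2'$), free over $\mathbb{Z}$ with bases of homogeneous elements having unique right idempotents. $|\mathrm{id}|$ multiplies by $(-1)^{\deg_h}$. $\widehat{DD}=\mathcal{I}$ is a rank-one Type DD bimodule: $\delta_{DD}(1)=\sum_sa_s\otimes c_s^{op}\in\mathcal{B}\otimes_{\mathcal{I}}(\mathcal{B}')^{op}$ of bidegree $(0,1)$ with $\sum_s(-1)^{\deg_hc_s}\mu_1(a_s)\otimes c_s^{op}+\sum_sa_s\otimes\mu_1(c_s)^{op}+\sum_{s,t}(-1)^{\deg_h(a_t)\deg_h(c_s)}a_sa_t\otimes c_t^{op}c_s^{op}=0$. $\widehat{A}\boxtimes\widehat{DD}$: $\widehat{A}$ with $\delta(x)=1\otimes m_1(x)+\sum_s(-1)^{\deg_h(xa_s)\deg_h(c_s)}c_s\otimes xa_s$ (similarly $\delta'$). An $\mathcal{A}_\infty$-morphism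 $F$ with $F_n=0$, $n>2$: bigrading-preserving $\mathcal{I}$-linear $F_1$ and $F_2:\widehat{A}\otimes_{\mathcal{I}}\mathcal{B}\to\widehat{A}'$ lowering $\deg_h$ by one, with $m_1'F_1=F_1m_1$, $m_1'F_2+m_2'(F_1\otimes\mathrm{id})=F_1m_2-F_2(m_1\otimes|\mathrm{id}|)-F_2(\mathrm{id}\otimes\mu_1)$, $-m_2'(F_2\otimes|\mathrm{id}|)=F_2(m_2\otimes\mathrm{id})-F_2(\mathrm{id}\otimes\mu_2)$. $F\boxtimes\mathrm{id}_{DD}(x)=1\otimes F_1(x)+\sum_s(-1)^{\deg_h(c_s)(1+\deg_hF_2(x\otimes a_s))}c_s\otimes F_2(x\otimes a_s)$. An $\mathcal{A}_\infty$ homotopy $H$ with $H_n=0$ for $n>1$ is an $\mathcal{I}$-linear $H_1:\widehat{A}\to\widehat{A}'$ preserving intrinsic degree and lowering $\deg_h$ by one with $F_1-G_1=m_1'H_1+H_1m_1$ and $F_2-G_2=-m_2'(H_1\otimes|\mathrm{id}|)+H_1m_2$. *)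

theory Defs
  imports Main
begin

definition neg1pow :: "int \<Rightarrow> int" where
  "neg1pow n = (if even n then 1 else -1)"

text \<open>Multiplication of an element of an abelian group by (-1)^h, i.e. the map |id|.\<close>
definition sgnmul :: "int \<Rightarrow> 'x::ab_group_add \<Rightarrow> 'x" where
  "sgnmul h y = (if even h then y else - y)"

fun natsmul :: "nat \<Rightarrow> 'x::monoid_add \<Rightarrow> 'x" where
  "natsmul 0 y = 0"
| "natsmul (Suc n) y = y + natsmul n y"

definition zsmul :: "int \<Rightarrow> 'x::ab_group_add \<Rightarrow> 'x" where
  "zsmul n y = (if 0 \<le> n then natsmul (nat n) y else - natsmul (nat (- n)) y)"

text \<open>A bigrading is a family P q h of subgroups (q = intrinsic, h = homological degree)
  giving a direct sum decomposition.\<close>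
definition bigraded :: "(int \<Rightarrow> int \<Rightarrow> 'x::ab_group_add set) \<Rightarrow> bool" where
  "bigraded P \<longleftrightarrow>
     (\<forall>q h. 0 \<in> P q h \<and> (\<forall>x\<in>P q h. \<forall>y\<in>P q h. x + y \<in> P q h \<and> - x \<in> P q h)) \<and>
     (\<forall>x. \<exists>D f. finite D \<and> (\<forall>d\<in>D. f d \<in> P (fst d) (snd d)) \<and> x = (\<Sum>d\<in>D. f d)) \<and>
     (\<forall>D f. finite D \<and> (\<forall>d\<in>D. f d \<in> P (fst d) (snd d)) \<and> (\<Sum>d\<in>D. f d) = 0
              \<longrightarrow> (\<forall>d\<in>D. f d = 0))"

definition hdeg :: "(int \<Rightarrow> int \<Rightarrow> 'x set) \<Rightarrow> 'x \<Rightarrow> int" where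
  "hdeg P y = (SOME h. \<exists>q. y \<in> P q h)"

definition free_Z_basis :: "'x::ab_group_add set \<Rightarrow> bool" where
  "free_Z_basis X \<longleftrightarrow>
     (\<forall>x. \<exists>c. finite {y\<in>X. c y \<noteq> 0} \<and> x = (\<Sum>y\<in>{y\<in>X. c y \<noteq> 0}. zsmul (c y) y)) \<and>
     (\<forall>c F. finite F \<and> F \<subseteq> X \<and> (\<Sum>y\<in>F. zsmul (c y) y) = 0 \<longrightarrow> (\<forall>y\<in>F. c y = 0))"

text \<open>e 0, ..., e (k-1) are the images of e_1, ..., e_k: orthogonal idempotents,
  summing to 1, Z-linearly independent (so their Z-span is Z e_1 x ... x Z e_k).\<close>
definition idem_sys :: "nat \<Rightarrow> (nat \<Rightarrow> 'r::ring_1) \<Rightarrow> bool" where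
  "idem_sys k e \<longleftrightarrow>
     (\<forall>i<k. \<forall>j<k. e i * e j = (if i = j then e i else 0)) \<and> (\<Sum>i<k. e i) = 1 \<and>
     (\<forall>n::nat \<Rightarrow> int. (\<Sum>i<k. of_int (n i) * e i) = 0 \<longrightarrow> (\<forall>i<k. n i = 0))"

definition dg_bigraded_algebra ::
  "nat \<Rightarrow> (nat \<Rightarrow> 'b::ring_1) \<Rightarrow> (int \<Rightarrow> int \<Rightarrow> 'b set) \<Rightarrow> ('b \<Rightarrow> 'b) \<Rightarrow> bool" where
  "dg_bigraded_algebra k e P mu1 \<longleftrightarrow>
     bigraded P \<and> idem_sys k e \<and>
     P 0 0 = range (\<lambda>n::nat \<Rightarrow> int. \<Sum>i<k. of_int (n i) * e i) \<and>
     (\<forall>q h q' h' x y. x \<in> P q h \<longrightarrow> y \<in> P q' h' \<longrightarrow> x * y \<in> P (q + q') (h + h')) \<and>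
     (\<forall>x y. mu1 (x + y) = mu1 x + mu1 y) \<and>
     (\<forall>q h x. x \<in> P q h \<longrightarrow> mu1 x \<in> P q (h + 1)) \<and>
     (\<forall>x. mu1 (mu1 x) = 0) \<and>
     (\<forall>q h x y. y \<in> P q h \<longrightarrow> mu1 (x * y) = sgnmul h (mu1 x * y) + x * mu1 y)"

definition dg_module ::
  "nat \<Rightarrow> (nat \<Rightarrow> 'b::ring_1) \<Rightarrow> (int \<Rightarrow> int \<Rightarrow> 'b set) \<Rightarrow> ('b \<Rightarrow> 'b) \<Rightarrow>
   (int \<Rightarrow> int \<Rightarrow> 'a::ab_group_add set) \<Rightarrow> ('a \<Rightarrow> 'a) \<Rightarrow> ('a \<Rightarrow> 'b \<Rightarrow> 'a) \<Rightarrow> bool" where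
  "dg_module k e PB mu1 PA m1 m2 \<longleftrightarrow>
     bigraded PA \<and>
     (\<forall>x y b. m2 (x + y) b = m2 x b + m2 y b) \<and>
     (\<forall>x b b'. m2 x (b + b') = m2 x b + m2 x b') \<and>
     (\<forall>x. m2 x 1 = x) \<and>
     (\<forall>x b b'. m2 (m2 x b) b' = m2 x (b * b')) \<and>
     (\<forall>q h q' h' x b. x \<in> PA q h \<longrightarrow> b \<in> PB q' h' \<longrightarrow> m2 x b \<in> PA (q + q') (h + h')) \<and>
     (\<forall>x y. m1 (x + y) = m1 x + m1 y) \<and>
     (\<forall>q h x. x \<in> PA q h \<longrightarrow> m1 x \<in> PA q (h + 1)) \<and>
     (\<forall>x. m1 (m1 x) = 0) \<and>
     (\<forall>q h x b. b \<in> PB q h \<longrightarrow> m1 (m2 x b) = sgnmul h (m2 (m1 x) b) + m2 x (mu1 b)) \<and>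
     (\<exists>X. free_Z_basis X \<and> (\<forall>x\<in>X. \<exists>q h. x \<in> PA q h) \<and>
          (\<forall>x\<in>X. \<exists>!i. i < k \<and> m2 x (e i) = x))"

section \<open>A-infinity morphisms with F_n = 0 (n > 2) and homotopies with H_n = 0 (n > 1)\<close>

definition ainf_morphism2 ::
  "nat \<Rightarrow> (nat \<Rightarrow> 'b::ring_1) \<Rightarrow> (int \<Rightarrow> int \<Rightarrow> 'b set) \<Rightarrow> ('b \<Rightarrow> 'b) \<Rightarrow>
   (int \<Rightarrow> int \<Rightarrow> 'a::ab_group_add set) \<Rightarrow> ('a \<Rightarrow> 'a) \<Rightarrow> ('a \<Rightarrow> 'b \<Rightarrow> 'a) \<Rightarrow>
   (int \<Rightarrow> int \<Rightarrow> 'd::ab_group_add set) \<Rightarrow> ('d \<Rightarrow> 'd) \<Rightarrow> ('d \<Rightarrow> 'b \<Rightarrow> 'd) \<Rightarrow>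
   ('a \<Rightarrow> 'd) \<Rightarrow> ('a \<Rightarrow> 'b \<Rightarrow> 'd) \<Rightarrow> bool" where
  "ainf_morphism2 k e PB mu1 PA m1 m2 PA' m1' m2' F1 F2 \<longleftrightarrow>
     (\<forall>x y. F1 (x + y) = F1 x + F1 y) \<and>
     (\<forall>i<k. \<forall>x. F1 (m2 x (e i)) = m2' (F1 x) (e i)) \<and>
     (\<forall>q h x. x \<in> PA q h \<longrightarrow> F1 x \<in> PA' q h) \<and>
     (\<forall>x y b. F2 (x + y) b = F2 x b + F2 y b) \<and>
     (\<forall>x b b'. F2 x (b + b') = F2 x b + F2 x b') \<and>
     (\<forall>i<k. \<forall>x b. F2 (m2 x (e i)) b = F2 x (e i * b)) \<and>
     (\<forall>i<k. \<forall>x b. F2 x (b * e i) = m2' (F2 x b) (e i)) \<and>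
     (\<forall>q h q' h' x b. x \<in> PA q h \<longrightarrow> b \<in> PB q' h' \<longrightarrow> F2 x b \<in> PA' (q + q') (h + h' - 1)) \<and>
     (\<forall>x. m1' (F1 x) = F1 (m1 x)) \<and>
     (\<forall>q h x b. b \<in> PB q h \<longrightarrow>
        m1' (F2 x b) + m2' (F1 x) b = F1 (m2 x b) - F2 (m1 x) (sgnmul h b) - F2 x (mu1 b)) \<and>
     (\<forall>q h x b b'. b' \<in> PB q h \<longrightarrow>
        - m2' (F2 x b) (sgnmul h b') = F2 (m2 x b) b' - F2 x (b * b'))"

definition ainf_homotopy1 ::
  "nat \<Rightarrow> (nat \<Rightarrow> 'b::ring_1) \<Rightarrow> (int \<Rightarrow> int \<Rightarrow> 'b set) \<Rightarrow>
   (int \<Rightarrow> int \<Rightarrow> 'a::ab_group_add set) \<Rightarrow> ('a \<Rightarrow> 'a) \<Rightarrow> ('a \<Rightarrow> 'b \<Rightarrow> 'a) \<Rightarrow>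
   (int \<Rightarrow> int \<Rightarrow> 'd::ab_group_add set) \<Rightarrow> ('d \<Rightarrow> 'd) \<Rightarrow> ('d \<Rightarrow> 'b \<Rightarrow> 'd) \<Rightarrow>
   ('a \<Rightarrow> 'd) \<Rightarrow> ('a \<Rightarrow> 'b \<Rightarrow> 'd) \<Rightarrow> ('a \<Rightarrow> 'd) \<Rightarrow> ('a \<Rightarrow> 'b \<Rightarrow> 'd) \<Rightarrow> ('a \<Rightarrow> 'd) \<Rightarrow> bool" where
  "ainf_homotopy1 k e PB PA m1 m2 PA' m1' m2' F1 F2 G1 G2 H1 \<longleftrightarrow>
     (\<forall>x y. H1 (x + y) = H1 x + H1 y) \<and>
     (\<forall>i<k. \<forall>x. H1 (m2 x (e i)) = m2' (H1 x) (e i)) \<and>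
     (\<forall>q h x. x \<in> PA q h \<longrightarrow> H1 x \<in> PA' q (h - 1)) \<and>
     (\<forall>x. F1 x - G1 x = m1' (H1 x) + H1 (m1 x)) \<and>
     (\<forall>q h x b. b \<in> PB q h \<longrightarrow>
        F2 x b - G2 x b = - m2' (H1 x) (sgnmul h b) + H1 (m2 x b))"

text \<open>An element of X (x) Y is represented by a list of terms (n, x, y) meaning
  the formal sum of n * (x (x) y).\<close>
type_synonym ('x, 'y) fsum = "(int \<times> 'x \<times> 'y) list"

definition fs_val :: "('x, 'y) fsum \<Rightarrow> ('x \<times> 'y \<Rightarrow> int)" where
  "fs_val u = (\<lambda>p. sum_list (map (\<lambda>(n, x, y). if (x, y) = p then n else 0) u))"

inductive_set zspan :: "('p \<Rightarrow> int) set \<Rightarrow> ('p \<Rightarrow> int) set" for G where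
  zero: "(\<lambda>_. 0) \<in> zspan G"
| gen: "g \<in> G \<Longrightarrow> g \<in> zspan G"
| diff: "u \<in> zspan G \<Longrightarrow> v \<in> zspan G \<Longrightarrow> (\<lambda>p. u p - v p) \<in> zspan G"

text \<open>Relations defining X (x)_I Y, where rx i is the right action of e_i on X and
  ly i the left action of e_i on Y.\<close>
definition tens_rels ::
  "nat \<Rightarrow> (nat \<Rightarrow> 'x::ab_group_add \<Rightarrow> 'x) \<Rightarrow> (nat \<Rightarrow> 'y::ab_group_add \<Rightarrow> 'y) \<Rightarrow> ('x \<times> 'y \<Rightarrow> int) set" where
  "tens_rels k rx ly =
     {fs_val [(1, x + x', y), (-1, x, y), (-1, x', y)] | x x' y. True} \<union>
     {fs_val [(1, x, y + y'), (-1, x, y), (-1, x, y')] | x y y'. True} \<union>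
     {fs_val [(1, rx i x, y), (-1, x, ly i y)] | i x y. i < k}"

definition tens_eq ::
  "nat \<Rightarrow> (nat \<Rightarrow> 'x::ab_group_add \<Rightarrow> 'x) \<Rightarrow> (nat \<Rightarrow> 'y::ab_group_add \<Rightarrow> 'y) \<Rightarrow>
   ('x, 'y) fsum \<Rightarrow> ('x, 'y) fsum \<Rightarrow> bool" where
  "tens_eq k rx ly u v \<longleftrightarrow> (\<lambda>p. fs_val u p - fs_val v p) \<in> zspan (tens_rels k rx ly)"

definition fs_neg :: "('x, 'y) fsum \<Rightarrow> ('x, 'y) fsum" where
  "fs_neg u = map (\<lambda>(n, x, y). (- n, x, y)) u"

text \<open>Maps on tensors (no automatic Koszul signs; signs are written via |id|).\<close>
definition id_tens :: "('y \<Rightarrow> ('z, 'w) fsum) \<Rightarrow> ('c, 'y) fsum \<Rightarrow> ('c, 'z \<times> 'w) fsum" where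
  "id_tens g u = concat (map (\<lambda>(n, c, y). map (\<lambda>(m, z, w). (n * m, c, (z, w))) (g y)) u)"

definition mu2_tens :: "('c::times, 'c \<times> 'w) fsum \<Rightarrow> ('c, 'w) fsum" where
  "mu2_tens u = map (\<lambda>(n, c, (c', w)). (n, c * c', w)) u"

definition mu1_tens :: "('c \<Rightarrow> 'c) \<Rightarrow> (int \<Rightarrow> int \<Rightarrow> 'w set) \<Rightarrow> ('c, 'w) fsum \<Rightarrow> ('c, 'w) fsum" where
  "mu1_tens mu1 P u = map (\<lambda>(n, c, w). (n * neg1pow (hdeg P w), mu1 c, w)) u"

text \<open>delta_DD(1) = sum over s < N of a s (x) (c s)^op, homogeneous of bidegree (0,1),
  satisfying the DD structure relation in B (x)_I (B')^op.  In (B')^op the left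
  I-action is e . c^op = (c e)^op and c_t^op c_s^op = (c_s c_t)^op.\<close>
definition dd_rank_one ::
  "nat \<Rightarrow> (nat \<Rightarrow> 'b::ring_1) \<Rightarrow> (int \<Rightarrow> int \<Rightarrow> 'b set) \<Rightarrow> ('b \<Rightarrow> 'b) \<Rightarrow>
   (nat \<Rightarrow> 'c::ring_1) \<Rightarrow> (int \<Rightarrow> int \<Rightarrow> 'c set) \<Rightarrow> ('c \<Rightarrow> 'c) \<Rightarrow>
   nat \<Rightarrow> (nat \<Rightarrow> 'b) \<Rightarrow> (nat \<Rightarrow> 'c) \<Rightarrow> (nat \<Rightarrow> int) \<Rightarrow> (nat \<Rightarrow> int) \<Rightarrow> (nat \<Rightarrow> int) \<Rightarrow> (nat \<Rightarrow> int) \<Rightarrow> bool" where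
  "dd_rank_one k e PB mu1 e' PB' mu1' N a c qa ha qc hc \<longleftrightarrow>
     (\<forall>s<N. a s \<in> PB (qa s) (ha s) \<and> c s \<in> PB' (qc s) (hc s) \<and>
            qa s + qc s = 0 \<and> ha s + hc s = 1) \<and>
     tens_eq k (\<lambda>i x. x * e i) (\<lambda>i y. y * e' i)
       (concat (map (\<lambda>s. [(neg1pow (hc s), mu1 (a s), c s), (1, a s, mu1' (c s))]) [0..<N]) @
        concat (map (\<lambda>s. map (\<lambda>t. (neg1pow (ha t * hc s), a s * a t, c s * c t)) [0..<N]) [0..<N]))
       []"

text \<open>Type D structure map of A box DD (a map A -> B' (x)_I A), on homogeneous x.\<close>
definition box_delta ::
  "(int \<Rightarrow> int \<Rightarrow> 'a set) \<Rightarrow> ('a \<Rightarrow> 'a) \<Rightarrow> ('a \<Rightarrow> 'b \<Rightarrow> 'a) \<Rightarrow>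
   nat \<Rightarrow> (nat \<Rightarrow> 'b) \<Rightarrow> (nat \<Rightarrow> 'c::one) \<Rightarrow> (nat \<Rightarrow> int) \<Rightarrow> 'a \<Rightarrow> ('c, 'a) fsum" where
  "box_delta PA m1 m2 N a c hc x =
     (1, 1, m1 x) # map (\<lambda>s. (neg1pow (hdeg PA (m2 x (a s)) * hc s), c s, m2 x (a s))) [0..<N]"

definition box_morph ::
  "(int \<Rightarrow> int \<Rightarrow> 'd set) \<Rightarrow> ('a \<Rightarrow> 'd) \<Rightarrow> ('a \<Rightarrow> 'b \<Rightarrow> 'd) \<Rightarrow>
   nat \<Rightarrow> (nat \<Rightarrow> 'b) \<Rightarrow> (nat \<Rightarrow> 'c::one) \<Rightarrow> (nat \<Rightarrow> int) \<Rightarrow> 'a \<Rightarrow> ('c, 'd) fsum" where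
  "box_morph PA' F1 F2 N a c hc x =
     (1, 1, F1 x) # map (\<lambda>s. (neg1pow (hc s * (1 + hdeg PA' (F2 x (a s)))), c s, F2 x (a s))) [0..<N]"

definition box_htpy :: "('a \<Rightarrow> 'd) \<Rightarrow> 'a \<Rightarrow> ('c::one, 'd) fsum" where
  "box_htpy H1 x = [(1, 1, H1 x)]"

end

theory Submission
  imports Defs
begin

text \<open>Both sides are finite formal sums of pure tensors, and their difference splits into the
  terms whose left factor is 1 and, for each summand a_s (x) c_s of delta_DD, the terms whose
  left factor is c_s.  The first group vanishes in the tensor product because
  F_1 - G_1 = m_1' H_1 + H_1 m_1 and mu_1'(1) = 0; the s-th group vanishes because of
  F_2 - G_2 = - m_2' (H_1 (x) |id|) + H_1 m_2 evaluated at a_s, once the Koszul signs are matched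
  using deg_h a_s + deg_h c_s = 1.\<close>

lemma zspan_cong: "u \<in> zspan G \<Longrightarrow> (\<And>p. u p = v p) \<Longrightarrow> v \<in> zspan G"
  by (metis ext)

lemma zspan_uminus: "u \<in> zspan G \<Longrightarrow> (\<lambda>p. - u p) \<in> zspan G"
  by (rule zspan_cong[OF zspan.diff[OF zspan.zero]]) simp_all

lemma zspan_add: "u \<in> zspan G \<Longrightarrow> v \<in> zspan G \<Longrightarrow> (\<lambda>p. u p + v p) \<in> zspan G"
  by (rule zspan_cong[OF zspan.diff[OF _ zspan_uminus]]) simp_all

lemma zspan_smult_nat: "u \<in> zspan G \<Longrightarrow> (\<lambda>p. int n * u p) \<in> zspan G"
proof (induction n)
  case 0
  show ?case using zspan.zero by simp
next
  case (Suc n)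
  then have "(\<lambda>p. u p + int n * u p) \<in> zspan G" by (intro zspan_add)
  then show ?case by (rule zspan_cong) (simp add: algebra_simps)
qed

lemma zspan_smult:
  assumes "u \<in> zspan G"
  shows "(\<lambda>p. (n::int) * u p) \<in> zspan G"
proof (cases "n \<ge> 0")
  case True
  with zspan_smult_nat[OF assms, of "nat n"] show ?thesis by simp
next
  case False
  with zspan_uminus[OF zspan_smult_nat[OF assms, of "nat (- n)"]] show ?thesis by simp
qed

lemma zspan_sum:
  "finite S \<Longrightarrow> (\<And>s. s \<in> S \<Longrightarrow> f s \<in> zspan G) \<Longrightarrow> (\<lambda>p. \<Sum>s\<in>S. f s p) \<in> zspan G"
proof (induction S rule: finite_induct)
  case empty
  then show ?case using zspan.zero by simp
next
  case (insert s S)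
  then have "(\<lambda>p. f s p + (\<Sum>s\<in>S. f s p)) \<in> zspan G" by (intro zspan_add) auto
  then show ?case using insert by simp
qed

definition pure_tensor :: "'x \<Rightarrow> 'y \<Rightarrow> ('x \<times> 'y \<Rightarrow> int)" where
  "pure_tensor x y = (\<lambda>p. if (x, y) = p then 1 else 0)"

lemma fs_val_Nil: "fs_val [] p = 0"
  by (simp add: fs_val_def)

lemma fs_val_Cons: "fs_val ((n, x, y) # u) p = n * pure_tensor x y p + fs_val u p"
  by (simp add: fs_val_def pure_tensor_def)

lemma fs_val_append: "fs_val (u @ v) p = fs_val u p + fs_val v p"
  by (simp add: fs_val_def)

lemma fs_val_fs_neg: "fs_val (fs_neg u) p = - fs_val u p"
  by (induction u) (auto simp: fs_neg_def fs_val_Nil fs_val_Cons)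

lemma fs_val_map_upt:
  "fs_val (map f [0..<N]) p = (\<Sum>s<N. case f s of (n, x, y) \<Rightarrow> n * pure_tensor x y p)"
proof -
  have "fs_val (map f xs) p = (\<Sum>s\<leftarrow>xs. case f s of (n, x, y) \<Rightarrow> n * pure_tensor x y p)" for xs
    by (induction xs) (auto simp: fs_val_Nil fs_val_Cons split: prod.split)
  then show ?thesis by (simp add: sum_list_distinct_conv_sum_set atLeast0LessThan)
qed

abbreviation tens_zero ::
  "nat \<Rightarrow> (nat \<Rightarrow> 'x::ab_group_add \<Rightarrow> 'x) \<Rightarrow> (nat \<Rightarrow> 'y::ab_group_add \<Rightarrow> 'y) \<Rightarrow> ('x \<times> 'y \<Rightarrow> int) set"
  where "tens_zero k rx ly \<equiv> zspan (tens_rels k rx ly)"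

lemma pure_tensor_add_left:
  "(\<lambda>p. pure_tensor (x + x') y p - pure_tensor x y p - pure_tensor x' y p) \<in> tens_zero k rx ly"
proof -
  have "fs_val [(1, x + x', y), (-1, x, y), (-1, x', y)] \<in> tens_zero k rx ly"
    unfolding tens_rels_def by (rule zspan.gen) blast
  then show ?thesis by (rule zspan_cong) (simp add: fs_val_Cons fs_val_Nil)
qed

lemma pure_tensor_add_right:
  "(\<lambda>p. pure_tensor x (y + y') p - pure_tensor x y p - pure_tensor x y' p) \<in> tens_zero k rx ly"
proof -
  have "fs_val [(1, x, y + y'), (-1, x, y), (-1, x, y')] \<in> tens_zero k rx ly"
    unfolding tens_rels_def by (rule zspan.gen) blast
  then show ?thesis by (rule zspan_cong) (simp add: fs_val_Cons fs_val_Nil)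
qed

lemma pure_tensor_zero_left: "pure_tensor 0 y \<in> tens_zero k rx ly"
  by (rule zspan_cong[OF zspan_uminus[OF pure_tensor_add_left[of 0 0]]]) simp

lemma pure_tensor_zero_right: "pure_tensor x 0 \<in> tens_zero k rx ly"
  by (rule zspan_cong[OF zspan_uminus[OF pure_tensor_add_right[of _ 0 0]]]) simp

lemma pure_tensor_sgnmul_right:
  "(\<lambda>p. pure_tensor x (sgnmul h y) p - neg1pow h * pure_tensor x y p) \<in> tens_zero k rx ly"
proof (cases "even h")
  case True
  then show ?thesis using zspan.zero by (simp add: sgnmul_def neg1pow_def)
next
  case False
  have "(\<lambda>p. pure_tensor x 0 p - (pure_tensor x (- y + y) p - pure_tensor x (- y) p
      - pure_tensor x y p)) \<in> tens_zero k rx ly"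
    by (intro zspan.diff pure_tensor_zero_right pure_tensor_add_right)
  with False show ?thesis by (simp add: sgnmul_def neg1pow_def)
qed

text \<open>The signs in the formal sums of the theorem are computed with hdeg, whose value on 0 is
  an arbitrary choice; hence a coefficient can only be controlled on nonzero entries.\<close>

lemma pure_tensor_change_coeff:
  assumes "y = 0 \<or> n = n'"
  shows "(\<lambda>p. n * pure_tensor x y p - n' * pure_tensor x y p) \<in> tens_zero k rx ly"
proof (cases "y = 0")
  case True
  have "(\<lambda>p. (n - n') * pure_tensor x 0 p) \<in> tens_zero k rx ly"
    by (intro zspan_smult pure_tensor_zero_right)
  then show ?thesis by (rule zspan_cong) (simp add: True algebra_simps)
next
  case False
  with assms show ?thesis using zspan.zero by simp
qed

lemma pure_tensor_four_term:
  assumes sum: "y1 = y2 + y3 + sgnmul h y4"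
    and c1: "y1 = 0 \<or> n1 = \<epsilon>" and c2: "y2 = 0 \<or> n2 = \<epsilon>" and c3: "y3 = 0 \<or> n3 = \<epsilon>"
    and c4: "y4 = 0 \<or> n4 = \<epsilon> * neg1pow h"
  shows "(\<lambda>p. n1 * pure_tensor x y1 p - n2 * pure_tensor x y2 p - n3 * pure_tensor x y3 p
      - n4 * pure_tensor x y4 p) \<in> tens_zero k rx ly"
proof -
  have "(\<lambda>p. (pure_tensor x (y2 + y3 + sgnmul h y4) p - pure_tensor x (y2 + y3) p
        - pure_tensor x (sgnmul h y4) p)
      + (pure_tensor x (y2 + y3) p - pure_tensor x y2 p - pure_tensor x y3 p)
      + (pure_tensor x (sgnmul h y4) p - neg1pow h * pure_tensor x y4 p)) \<in> tens_zero k rx ly"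
    by (intro zspan_add pure_tensor_add_right pure_tensor_sgnmul_right)
  then have "(\<lambda>p. pure_tensor x y1 p - pure_tensor x y2 p - pure_tensor x y3 p
      - neg1pow h * pure_tensor x y4 p) \<in> tens_zero k rx ly"
    unfolding sum by (rule zspan_cong) linarith
  then have lin: "(\<lambda>p. \<epsilon> * (pure_tensor x y1 p - pure_tensor x y2 p - pure_tensor x y3 p
      - neg1pow h * pure_tensor x y4 p)) \<in> tens_zero k rx ly"
    by (rule zspan_smult)
  have "(\<lambda>p. \<epsilon> * (pure_tensor x y1 p - pure_tensor x y2 p - pure_tensor x y3 p
      - neg1pow h * pure_tensor x y4 p)
      + (n1 * pure_tensor x y1 p - \<epsilon> * pure_tensor x y1 p)
      - (n2 * pure_tensor x y2 p - \<epsilon> * pure_tensor x y2 p)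
      - (n3 * pure_tensor x y3 p - \<epsilon> * pure_tensor x y3 p)
      - (n4 * pure_tensor x y4 p - (\<epsilon> * neg1pow h) * pure_tensor x y4 p)) \<in> tens_zero k rx ly"
    by (rule zspan.diff[OF zspan.diff[OF zspan.diff[OF zspan_add[OF lin]]]]
        pure_tensor_change_coeff[OF c1] pure_tensor_change_coeff[OF c2]
        pure_tensor_change_coeff[OF c3] pure_tensor_change_coeff[OF c4])+
  then show ?thesis by (rule zspan_cong) (simp add: algebra_simps)
qed

lemma neg1pow_add: "neg1pow (m + n) = neg1pow m * neg1pow n"
  unfolding neg1pow_def by auto

lemma neg1pow_uminus: "neg1pow (- n) = neg1pow n"
  unfolding neg1pow_def by simp

lemma hdeg_eq_or_zero:
  assumes P: "bigraded P" and y: "y \<in> P q h"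
  shows "y = 0 \<or> hdeg P y = h"
proof (rule disjCI)
  assume ne: "hdeg P y \<noteq> h"
  have "\<exists>q'. y \<in> P q' (hdeg P y)"
    unfolding hdeg_def by (rule someI_ex) (use y in blast)
  then obtain q' where y': "y \<in> P q' (hdeg P y)" ..
  have closed: "\<forall>q h. 0 \<in> P q h \<and> (\<forall>x\<in>P q h. \<forall>y\<in>P q h. x + y \<in> P q h \<and> - x \<in> P q h)"
    using P unfolding bigraded_def by (elim conjE)
  have independent: "\<forall>D f. finite D \<and> (\<forall>d\<in>D. f d \<in> P (fst d) (snd d)) \<and> (\<Sum>d\<in>D. f d) = 0
      \<longrightarrow> (\<forall>d\<in>D. f d = 0)"
    using P unfolding bigraded_def by (elim conjE)
  define f where "f d = (if d = (q, h) then y else - y)" for d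
  have "- y \<in> P q' (hdeg P y)" using closed y' by blast
  then have "\<forall>d\<in>{(q, h), (q', hdeg P y)}. f d \<in> P (fst d) (snd d)"
    using y ne by (auto simp: f_def)
  moreover have "(\<Sum>d\<in>{(q, h), (q', hdeg P y)}. f d) = 0"
    using ne by (subst sum.insert) (auto simp: f_def)
  ultimately have "f (q, h) = 0"
    using independent by (meson finite.emptyI finite.insertI insertI1)
  then show "y = 0" by (simp add: f_def)
qed

lemma dg_bigraded_algebra_mu1_one:
  assumes "dg_bigraded_algebra k e P mu1"
  shows "mu1 1 = 0"
proof -
  have units: "P 0 0 = range (\<lambda>n::nat \<Rightarrow> int. \<Sum>i<k. of_int (n i) * e i)"
    using assms unfolding dg_bigraded_algebra_def by (elim conjE)
  have leibniz: "\<forall>q h x y. y \<in> P q h \<longrightarrow> mu1 (x * y) = sgnmul h (mu1 x * y) + x * mu1 y"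
    using assms unfolding dg_bigraded_algebra_def by (elim conjE)
  have "(\<Sum>i<k. e i) = 1"
    using assms unfolding dg_bigraded_algebra_def idem_sys_def by (elim conjE)
  then have "1 \<in> P 0 0" unfolding units by (intro range_eqI[where x="\<lambda>_. 1"]) simp
  then have "mu1 (1 * 1) = sgnmul 0 (mu1 1 * 1) + 1 * mu1 1" using leibniz by blast
  then show ?thesis by (simp add: sgnmul_def)
qed

lemma dg_module_bigraded: "dg_module k e PB mu1 PA m1 m2 \<Longrightarrow> bigraded PA"
  unfolding dg_module_def by (elim conjE)

lemma dg_module_action_mem:
  "dg_module k e PB mu1 PA m1 m2 \<Longrightarrow> x \<in> PA q h \<Longrightarrow> b \<in> PB q' h' \<Longrightarrow> m2 x b \<in> PA (q + q') (h + h')"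
  unfolding dg_module_def by (elim conjE) blast

lemma dg_module_action_uminus:
  assumes "dg_module k e PB mu1 PA m1 m2"
  shows "m2 x (- b) = - m2 x b"
proof -
  have add: "\<forall>x b b'. m2 x (b + b') = m2 x b + m2 x b'"
    using assms unfolding dg_module_def by (elim conjE)
  then have "m2 x (0 + 0) = m2 x 0 + m2 x 0" by blast
  then have "m2 x 0 = 0" by simp
  moreover have "m2 x (b + - b) = m2 x b + m2 x (- b)" using add by blast
  ultimately show ?thesis by (simp add: eq_neg_iff_add_eq_0 add.commute)
qed

lemma ainf_morphism2_F2_mem:
  "ainf_morphism2 k e PB mu1 PA m1 m2 PA' m1' m2' F1 F2 \<Longrightarrow> x \<in> PA q h \<Longrightarrow> b \<in> PB q' h' \<Longrightarrow>
    F2 x b \<in> PA' (q + q') (h + h' - 1)"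
  unfolding ainf_morphism2_def by (elim conjE) meson

lemma ainf_homotopy1_H1_mem:
  "ainf_homotopy1 k e PB PA m1 m2 PA' m1' m2' F1 F2 G1 G2 H1 \<Longrightarrow> x \<in> PA q h \<Longrightarrow> H1 x \<in> PA' q (h - 1)"
  unfolding ainf_homotopy1_def by (elim conjE) blast

lemma ainf_homotopy1_H1_zero:
  assumes "ainf_homotopy1 k e PB PA m1 m2 PA' m1' m2' F1 F2 G1 G2 H1"
  shows "H1 0 = 0"
proof -
  from assms have "H1 (0 + 0) = H1 0 + H1 0" unfolding ainf_homotopy1_def by (elim conjE) blast
  then show ?thesis by simp
qed

lemma ainf_homotopy1_F1_eq:
  assumes "ainf_homotopy1 k e PB PA m1 m2 PA' m1' m2' F1 F2 G1 G2 H1"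
  shows "F1 x = G1 x + H1 (m1 x) + m1' (H1 x)"
proof -
  from assms have "F1 x - G1 x = m1' (H1 x) + H1 (m1 x)" unfolding ainf_homotopy1_def by (elim conjE) blast
  then show ?thesis by (simp add: diff_eq_eq ac_simps)
qed

lemma ainf_homotopy1_F2_eq:
  assumes A': "dg_module k e PB mu1 PA' m1' m2'"
    and H: "ainf_homotopy1 k e PB PA m1 m2 PA' m1' m2' F1 F2 G1 G2 H1"
    and b: "b \<in> PB q hb" and deg: "hb + hc = 1"
  shows "F2 x b = G2 x b + H1 (m2 x b) + sgnmul hc (m2' (H1 x) b)"
proof -
  have "F2 x b - G2 x b = - m2' (H1 x) (sgnmul hb b) + H1 (m2 x b)"
    using H b unfolding ainf_homotopy1_def by (elim conjE) blast
  moreover have "even hb \<longleftrightarrow> odd hc"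
    using deg by (metis add_diff_cancel_right' even_add odd_one)
  then have "- m2' (H1 x) (sgnmul hb b) = sgnmul hc (m2' (H1 x) b)"
    using dg_module_action_uminus[OF A'] unfolding sgnmul_def by auto
  ultimately show ?thesis by (simp add: diff_eq_eq ac_simps)
qed

lemma box_htpy_defect_unit:
  assumes B': "dg_bigraded_algebra k' e' PB' mu1'"
    and H: "ainf_homotopy1 k e PB PA m1 m2 PA' m1' m2' F1 F2 G1 G2 H1"
  shows "(\<lambda>p. pure_tensor 1 (F1 x) p - pure_tensor 1 (G1 x) p - pure_tensor 1 (H1 (m1 x)) p
      - pure_tensor 1 (m1' (H1 x)) p - n * pure_tensor (mu1' 1) (H1 x) p) \<in> tens_zero k'' rx ly"
proof -
  have "F1 x = G1 x + H1 (m1 x) + sgnmul 0 (m1' (H1 x))"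
    using ainf_homotopy1_F1_eq[OF H] by (simp add: sgnmul_def)
  then have "(\<lambda>p. 1 * pure_tensor 1 (F1 x) p - 1 * pure_tensor 1 (G1 x) p
      - 1 * pure_tensor 1 (H1 (m1 x)) p - 1 * pure_tensor 1 (m1' (H1 x)) p) \<in> tens_zero k'' rx ly"
    by (rule pure_tensor_four_term[where \<epsilon> = 1]) (simp_all add: neg1pow_def)
  moreover have "(\<lambda>p. (- n) * pure_tensor (mu1' 1) (H1 x) p) \<in> tens_zero k'' rx ly"
    unfolding dg_bigraded_algebra_mu1_one[OF B'] by (intro zspan_smult pure_tensor_zero_left)
  ultimately show ?thesis by (rule zspan_cong[OF zspan_add]) simp
qed

lemma box_htpy_defect_summand:
  assumes A: "dg_module k e PB mu1 PA m1 m2" and A': "dg_module k e PB mu1 PA' m1' m2'"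
    and F: "ainf_morphism2 k e PB mu1 PA m1 m2 PA' m1' m2' F1 F2"
    and G: "ainf_morphism2 k e PB mu1 PA m1 m2 PA' m1' m2' G1 G2"
    and H: "ainf_homotopy1 k e PB PA m1 m2 PA' m1' m2' F1 F2 G1 G2 H1"
    and x: "x \<in> PA q h" and b: "b \<in> PB qb hb" and deg: "hb + hc = 1"
  shows "(\<lambda>p. neg1pow (hc * (1 + hdeg PA' (F2 x b))) * pure_tensor c (F2 x b) p
      - neg1pow (hc * (1 + hdeg PA' (G2 x b))) * pure_tensor c (G2 x b) p
      - neg1pow (hdeg PA (m2 x b) * hc) * pure_tensor c (H1 (m2 x b)) p
      - neg1pow (hdeg PA' (m2' (H1 x) b) * hc) * pure_tensor c (m2' (H1 x) b) p)
    \<in> tens_zero k' rx ly"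
proof (rule pure_tensor_four_term[where \<epsilon> = "neg1pow (hc * (h + hb))"])
  show "F2 x b = G2 x b + H1 (m2 x b) + sgnmul hc (m2' (H1 x) b)"
    by (rule ainf_homotopy1_F2_eq[OF A' H b deg])
  show "F2 x b = 0 \<or> neg1pow (hc * (1 + hdeg PA' (F2 x b))) = neg1pow (hc * (h + hb))"
    using hdeg_eq_or_zero[OF dg_module_bigraded[OF A'] ainf_morphism2_F2_mem[OF F x b]] by auto
  show "G2 x b = 0 \<or> neg1pow (hc * (1 + hdeg PA' (G2 x b))) = neg1pow (hc * (h + hb))"
    using hdeg_eq_or_zero[OF dg_module_bigraded[OF A'] ainf_morphism2_F2_mem[OF G x b]] by auto
  show "H1 (m2 x b) = 0 \<or> neg1pow (hdeg PA (m2 x b) * hc) = neg1pow (hc * (h + hb))"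
    using hdeg_eq_or_zero[OF dg_module_bigraded[OF A] dg_module_action_mem[OF A x b]]
      ainf_homotopy1_H1_zero[OF H] by (auto simp: mult.commute)
  have "(h - 1 + hb) * hc = hc * (h + hb) + - hc" by algebra
  then have sign: "neg1pow ((h - 1 + hb) * hc) = neg1pow (hc * (h + hb)) * neg1pow hc"
    by (simp only: neg1pow_add neg1pow_uminus)
  show "m2' (H1 x) b = 0 \<or>
      neg1pow (hdeg PA' (m2' (H1 x) b) * hc) = neg1pow (hc * (h + hb)) * neg1pow hc"
    using hdeg_eq_or_zero[OF dg_module_bigraded[OF A']
        dg_module_action_mem[OF A' ainf_homotopy1_H1_mem[OF H x] b]] sign
    by auto
qed

lemma mu2_tens_id_tens_box_htpy:
  "mu2_tens (id_tens (box_htpy H1) u) = map (\<lambda>(n, c, y). (n, c :: 'c::ring_1, H1 y)) u"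
  unfolding mu2_tens_def id_tens_def box_htpy_def by (induction u) auto

lemma mu2_tens_id_tens_unit: "mu2_tens (id_tens g [(1, 1 :: 'c::ring_1, z)]) = g z"
  by (simp add: id_tens_def mu2_tens_def case_prod_beta map_idI)

lemma box_homotopy_difference:
  "(\<lambda>p. fs_val (box_morph PA' F1 F2 N a c hc x @ fs_neg (box_morph PA' G1 G2 N a c hc x)) p -
      fs_val (mu2_tens (id_tens (box_htpy H1) (box_delta PA m1 m2 N a c hc x)) @
       mu2_tens (id_tens (box_delta PA' m1' m2' N a c hc) (box_htpy H1 x)) @
       mu1_tens mu1' PA' (box_htpy H1 x)) p)
   = (\<lambda>p. (pure_tensor 1 (F1 x) p - pure_tensor 1 (G1 x) p - pure_tensor 1 (H1 (m1 x)) p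
          - pure_tensor 1 (m1' (H1 x)) p - neg1pow (hdeg PA' (H1 x)) * pure_tensor (mu1' 1) (H1 x) p)
       + (\<Sum>s<N. neg1pow (hc s * (1 + hdeg PA' (F2 x (a s)))) * pure_tensor (c s) (F2 x (a s)) p
          - neg1pow (hc s * (1 + hdeg PA' (G2 x (a s)))) * pure_tensor (c s) (G2 x (a s)) p
          - neg1pow (hdeg PA (m2 x (a s)) * hc s) * pure_tensor (c s) (H1 (m2 x (a s))) p
          - neg1pow (hdeg PA' (m2' (H1 x) (a s)) * hc s) * pure_tensor (c s) (m2' (H1 x) (a s)) p))"
  for c :: "nat \<Rightarrow> 'c::ring_1"
  unfolding box_morph_def box_delta_def mu2_tens_id_tens_box_htpy mu2_tens_id_tens_unit
    mu1_tens_def box_htpy_def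
  by (simp add: fs_val_append fs_val_fs_neg fs_val_Cons fs_val_Nil fs_val_map_upt
      sum_subtractf sum.distrib algebra_simps)

theorem proposition6p52:
  fixes k N :: nat
    and e :: "nat \<Rightarrow> 'b::ring_1" and PB :: "int \<Rightarrow> int \<Rightarrow> 'b set" and mu1 :: "'b \<Rightarrow> 'b"
    and e' :: "nat \<Rightarrow> 'c::ring_1" and PB' :: "int \<Rightarrow> int \<Rightarrow> 'c set" and mu1' :: "'c \<Rightarrow> 'c"
    and PA :: "int \<Rightarrow> int \<Rightarrow> 'a::ab_group_add set" and m1 :: "'a \<Rightarrow> 'a" and m2 :: "'a \<Rightarrow> 'b \<Rightarrow> 'a"
    and PA' :: "int \<Rightarrow> int \<Rightarrow> 'd::ab_group_add set" and m1' :: "'d \<Rightarrow> 'd" and m2' :: "'d \<Rightarrow> 'b \<Rightarrow> 'd"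
    and a :: "nat \<Rightarrow> 'b" and c :: "nat \<Rightarrow> 'c" and qa ha qc hc :: "nat \<Rightarrow> int"
    and F1 G1 H1 :: "'a \<Rightarrow> 'd" and F2 G2 :: "'a \<Rightarrow> 'b \<Rightarrow> 'd"
  assumes B: "dg_bigraded_algebra k e PB mu1"
    and B': "dg_bigraded_algebra k e' PB' mu1'"
    and A: "dg_module k e PB mu1 PA m1 m2"
    and A': "dg_module k e PB mu1 PA' m1' m2'"
    and DD: "dd_rank_one k e PB mu1 e' PB' mu1' N a c qa ha qc hc"
    and F: "ainf_morphism2 k e PB mu1 PA m1 m2 PA' m1' m2' F1 F2"
    and G: "ainf_morphism2 k e PB mu1 PA m1 m2 PA' m1' m2' G1 G2"
    and H: "ainf_homotopy1 k e PB PA m1 m2 PA' m1' m2' F1 F2 G1 G2 H1"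
  shows "\<forall>q h x. x \<in> PA q h \<longrightarrow>
    tens_eq k (\<lambda>i y. y * e' i) (\<lambda>i z. m2' z (e i))
      (box_morph PA' F1 F2 N a c hc x @ fs_neg (box_morph PA' G1 G2 N a c hc x))
      (mu2_tens (id_tens (box_htpy H1) (box_delta PA m1 m2 N a c hc x)) @
       mu2_tens (id_tens (box_delta PA' m1' m2' N a c hc) (box_htpy H1 x)) @
       mu1_tens mu1' PA' (box_htpy H1 x))"
proof -
  have DD_terms: "a s \<in> PB (qa s) (ha s)" "ha s + hc s = 1" if "s < N" for s
    using DD that unfolding dd_rank_one_def by auto
  show ?thesis
    unfolding tens_eq_def box_homotopy_difference
    by (intro allI impI zspan_add zspan_sum box_htpy_defect_unit[OF B' H] finite_lessThan
        box_htpy_defect_summand[OF A A' F G H _ DD_terms]) auto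
qed

end
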